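(* Let $\kappa\ge1$ and $\alpha_1,\alpha_2\in\mathcal{A}(\kappa)$. Then $(\alpha_1\circledast_\kappa\alpha_2)(0)=\alpha_1(0)\alpha_2(0)+\sum_{l=1}^\infty(\kappa+1)\kappa^{l-1}\alpha_1(l)\alpha_2(l)$; $(\alpha_1\circledast_\kappa\alpha_2)(1)=\sum_{l=0}^\infty\kappa^l[\alpha_1(l)\alpha_2(l+1)+\alpha_1(l+1)\alpha_2(l)]$; and for $n\ge2$, $$(\alpha_1\circledast_\kappa\alpha_2)(n)=\sum_{l=0}^\infty\kappa^l[\alpha_1(l)\alpha_2(l+n)+\alpha_1(l+n)\alpha_2(l)]+\sum_{i=1}^{n-1}\alpha_1(i)\alpha_2(n-i)+\sum_{i=1}^{n-1}\sum_{l=1}^\infty(\kappa-1)\kappa^{l-1}\alpha_1(l+i)\alpha_2(l+n-i).$$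
   Context: $\mathrm{T}_\kappa=(V_\kappa,E_\kappa)$ is the Cayley tree of order $\kappa$ (infinite connected acyclic graph, every vertex of degree $\kappa+1$), $d$ its graph distance. $\mathcal{A}(\kappa)$ is the set of functions $\alpha:\mathbb{N}_0\to\mathbb{C}$ such that the kernel $T_\alpha(x,y)=\alpha(d(x,y))$ defines a bounded operator on $\ell^2(V_\kappa)$. Fix a sequence $(v_n)_{n\ge0}$ in $V_\kappa$ with $d(v_k,v_n)=|k-n|$ for all $k,n\ge0$; for $\alpha_1,\alpha_2\in\mathcal{A}(\kappa)$ define $(\alpha_1\circledast_\kappa\alpha_2)(n)=\sum_{x\in V_\kappa}\alpha_1(d(v_0,x))\alpha_2(d(x,v_n))$ for $n\ge0$ (this series converges and does not depend on the choice of $(v_n)$). *)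

theory Defs
  imports "HOL-Analysis.Analysis"
begin

definition is_walk :: "('v \<Rightarrow> 'v \<Rightarrow> bool) \<Rightarrow> 'v list \<Rightarrow> bool" where
  "is_walk E xs \<longleftrightarrow> xs \<noteq> [] \<and> (\<forall>i. Suc i < length xs \<longrightarrow> E (xs ! i) (xs ! Suc i))"

definition gdist :: "('v \<Rightarrow> 'v \<Rightarrow> bool) \<Rightarrow> 'v \<Rightarrow> 'v \<Rightarrow> nat" where
  "gdist E x y = (LEAST n. \<exists>xs. is_walk E xs \<and> length xs = Suc n \<and> hd xs = x \<and> last xs = y)"

definition cayley_tree :: "nat \<Rightarrow> ('v \<Rightarrow> 'v \<Rightarrow> bool) \<Rightarrow> bool" where
  "cayley_tree \<kappa> E \<longleftrightarrow>
     (\<forall>x y. E x y \<longrightarrow> E y x) \<and> (\<forall>x. \<not> E x x) \<and>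
     infinite (UNIV :: 'v set) \<and>
     (\<forall>x y. \<exists>xs. is_walk E xs \<and> hd xs = x \<and> last xs = y) \<and>
     (\<nexists>xs. 3 \<le> length xs \<and> distinct xs \<and> is_walk E (xs @ [hd xs])) \<and>
     (\<forall>x. finite {y. E x y} \<and> card {y. E x y} = \<kappa> + 1)"

text \<open>The kernel T(x,y) = alpha(d(x,y)) defines a bounded operator on l^2(V):
  for every f in l^2(V) the defining series converge, Tf lies in l^2(V),
  and ||Tf|| \<le> C ||f|| for a uniform constant C.\<close>
definition l2 :: "('v \<Rightarrow> complex) \<Rightarrow> bool" where
  "l2 f \<longleftrightarrow> (\<lambda>y. (norm (f y))\<^sup>2) summable_on UNIV"

definition l2norm_sq :: "('v \<Rightarrow> complex) \<Rightarrow> real" where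
  "l2norm_sq f = (\<Sum>\<^sub>\<infinity>y. (norm (f y))\<^sup>2)"

definition in_A :: "nat \<Rightarrow> ('v \<Rightarrow> 'v \<Rightarrow> bool) \<Rightarrow> (nat \<Rightarrow> complex) \<Rightarrow> bool" where
  "in_A \<kappa> E \<alpha> \<longleftrightarrow> (\<exists>C. \<forall>f. l2 f \<longrightarrow>
      (\<forall>x. (\<lambda>y. \<alpha> (gdist E x y) * f y) summable_on UNIV) \<and>
      l2 (\<lambda>x. \<Sum>\<^sub>\<infinity>y. \<alpha> (gdist E x y) * f y) \<and>
      l2norm_sq (\<lambda>x. \<Sum>\<^sub>\<infinity>y. \<alpha> (gdist E x y) * f y) \<le> C * l2norm_sq f)"

text \<open>The convolution, computed along a geodesic sequence v.\<close>
definition geodesic_seq :: "('v \<Rightarrow> 'v \<Rightarrow> bool) \<Rightarrow> (nat \<Rightarrow> 'v) \<Rightarrow> bool" where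
  "geodesic_seq E v \<longleftrightarrow> (\<forall>k n. gdist E (v k) (v n) = (if k \<le> n then n - k else k - n))"

definition tree_conv :: "('v \<Rightarrow> 'v \<Rightarrow> bool) \<Rightarrow> (nat \<Rightarrow> 'v) \<Rightarrow> (nat \<Rightarrow> complex) \<Rightarrow> (nat \<Rightarrow> complex) \<Rightarrow> nat \<Rightarrow> complex" where
  "tree_conv E v \<alpha>1 \<alpha>2 n = (\<Sum>\<^sub>\<infinity>x. \<alpha>1 (gdist E (v 0) x) * \<alpha>2 (gdist E x (v n)))"

end

(* Since the tree has no cycles, every vertex x has a unique nearest point v j on the geodesic
   segment v 0, ..., v n, and d(x, v k) = h + |k - j| for all k \<le> n, where h = d(x, v j).
   The sum defining the convolution therefore splits into finite fibres indexed by (j, h), on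
   which the summand is the constant alpha1(h + j) alpha2(h + n - j). For h > 0 the fibre of
   (j, h) is the union, over the neighbours y of v j off the segment, of the vertices at distance
   h from v j reached through y, and each of these branches has kappa^(h-1) elements. Separating
   the end points j = 0, n of the segment from the inner points gives the three formulas. *)

theory Submission
  imports Defs
begin

(* Walks are indexed by functions rather than lists, so that splicing and reversing them is
   index arithmetic. *)
definition walk_fun :: "('v \<Rightarrow> 'v \<Rightarrow> bool) \<Rightarrow> (nat \<Rightarrow> 'v) \<Rightarrow> nat \<Rightarrow> bool" where
  "walk_fun E w n \<longleftrightarrow> (\<forall>k<n. E (w k) (w (Suc k)))"

lemma is_walk_map_upt: "is_walk E (map w [0..<Suc n]) \<longleftrightarrow> walk_fun E w n"
  by (auto simp: is_walk_def walk_fun_def nth_append simp del: upt_Suc)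

lemma ex_is_walk_iff_walk_fun:
  "(\<exists>xs. is_walk E xs \<and> length xs = Suc n \<and> hd xs = x \<and> last xs = y) \<longleftrightarrow>
   (\<exists>w. walk_fun E w n \<and> w 0 = x \<and> w n = y)"
proof
  assume "\<exists>xs. is_walk E xs \<and> length xs = Suc n \<and> hd xs = x \<and> last xs = y"
  then obtain xs where xs: "is_walk E xs" "length xs = Suc n" "hd xs = x" "last xs = y"
    by blast
  then have "map ((!) xs) [0..<Suc n] = xs" and "xs \<noteq> []"
    by (metis map_nth, auto)
  then show "\<exists>w. walk_fun E w n \<and> w 0 = x \<and> w n = y"
    using xs is_walk_map_upt[of E "(!) xs" n]
    by (intro exI[of _ "(!) xs"]) (simp add: hd_conv_nth last_conv_nth)
next
  assume "\<exists>w. walk_fun E w n \<and> w 0 = x \<and> w n = y"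
  then obtain w where "walk_fun E w n" "w 0 = x" "w n = y"
    by blast
  then show "\<exists>xs. is_walk E xs \<and> length xs = Suc n \<and> hd xs = x \<and> last xs = y"
    using is_walk_map_upt[of E w n]
    by (intro exI[of _ "map w [0..<Suc n]"]) (simp add: hd_map last_map del: upt_Suc)
qed

lemma gdist_walk_fun: "gdist E x y = (LEAST n. \<exists>w. walk_fun E w n \<and> w 0 = x \<and> w n = y)"
  unfolding gdist_def ex_is_walk_iff_walk_fun ..

lemma walk_fun_le: "walk_fun E w n \<Longrightarrow> m \<le> n \<Longrightarrow> walk_fun E w m"
  by (simp add: walk_fun_def)

lemma walk_fun_shift: "walk_fun E w n \<Longrightarrow> walk_fun E (\<lambda>k. w (i + k)) (n - i)"
  by (simp add: walk_fun_def)

lemma walk_fun_snoc: "walk_fun E w n \<Longrightarrow> E (w n) x \<Longrightarrow> walk_fun E (w(Suc n := x)) (Suc n)"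
  by (auto simp: walk_fun_def less_Suc_eq)

lemma walk_fun_append:
  assumes "walk_fun E w1 a" "walk_fun E w2 b" "w1 a = w2 0"
  shows "walk_fun E (\<lambda>k. if k \<le> a then w1 k else w2 (k - a)) (a + b)"
  unfolding walk_fun_def
proof (intro allI impI)
  fix k assume "k < a + b"
  then consider "k < a" | "k = a" "0 < b" | "a < k" "k - a < b"
    by linarith
  then show "E (if k \<le> a then w1 k else w2 (k - a)) (if Suc k \<le> a then w1 (Suc k) else w2 (Suc k - a))"
  proof cases
    case 3
    then have "Suc k - a = Suc (k - a)"
      by simp
    then show ?thesis
      using 3 assms(2) by (simp add: walk_fun_def)
  qed (use assms in \<open>simp_all add: walk_fun_def\<close>)
qed

locale cayley_graph =
  fixes \<kappa> :: nat and E :: "'v \<Rightarrow> 'v \<Rightarrow> bool"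
  assumes cayley: "cayley_tree \<kappa> E"
begin

abbreviation d :: "'v \<Rightarrow> 'v \<Rightarrow> nat" where
  "d \<equiv> gdist E"

lemma edge_sym: "E x y \<Longrightarrow> E y x"
  using cayley unfolding cayley_tree_def by blast

lemma edge_irrefl: "\<not> E x x"
  using cayley unfolding cayley_tree_def by blast

lemma finite_nbrs: "finite {y. E x y}"
  using cayley unfolding cayley_tree_def by blast

lemma card_nbrs: "card {y. E x y} = \<kappa> + 1"
  using cayley unfolding cayley_tree_def by blast

lemma exists_walk: "\<exists>n w. walk_fun E w n \<and> w 0 = x \<and> w n = y"
proof -
  obtain xs where xs: "is_walk E xs" "hd xs = x" "last xs = y"
    using cayley unfolding cayley_tree_def by blast
  then have "length xs = Suc (length xs - 1)"
    by (cases xs) (auto simp: is_walk_def)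
  then show ?thesis
    using xs ex_is_walk_iff_walk_fun[of E "length xs - 1" x y] by metis
qed

lemma no_cycle_walk:
  assumes "walk_fun E c m" "3 \<le> m" "c m = c 0" "inj_on c {..<m}"
  shows False
proof -
  let ?xs = "map c [0..<m]"
  have "?xs @ [hd ?xs] = map c [0..<Suc m]"
    using assms(2,3) by (simp add: hd_map)
  then have "is_walk E (?xs @ [hd ?xs])"
    using assms(1) is_walk_map_upt by metis
  moreover have "distinct ?xs"
    using assms(4) by (simp add: distinct_map atLeast0LessThan)
  ultimately show False
    using cayley assms(2) unfolding cayley_tree_def by auto
qed

lemma walk_fun_rev:
  assumes "walk_fun E w n"
  shows "walk_fun E (\<lambda>k. w (n - k)) n"
  unfolding walk_fun_def
proof (intro allI impI)
  fix k assume "k < n"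
  then have "E (w (n - Suc k)) (w (Suc (n - Suc k)))" and "Suc (n - Suc k) = n - k"
    using assms by (auto simp: walk_fun_def)
  then show "E (w (n - k)) (w (n - Suc k))"
    using edge_sym by simp
qed

lemma dist_le_walk: "walk_fun E w n \<Longrightarrow> d (w 0) (w n) \<le> n"
  unfolding gdist_walk_fun by (rule Least_le) blast

lemma shortest_walk: "\<exists>w. walk_fun E w (d x y) \<and> w 0 = x \<and> w (d x y) = y"
  unfolding gdist_walk_fun using exists_walk[of x y] by (rule LeastI_ex)

lemma dist_self [simp]: "d x x = 0"
  using dist_le_walk[of "\<lambda>_. x" 0] by (simp add: walk_fun_def)

lemma dist_eq_0_iff: "d x y = 0 \<longleftrightarrow> x = y"
  using shortest_walk[of x y] by auto

lemma dist_commute: "d x y = d y x"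
proof -
  have "d b a \<le> d a b" for a b
    using shortest_walk[of a b] dist_le_walk[OF walk_fun_rev] by fastforce
  then show ?thesis
    by (simp add: order_antisym)
qed

lemma dist_triangle: "d x z \<le> d x y + d y z"
proof -
  obtain w1 where w1: "walk_fun E w1 (d x y)" "w1 0 = x" "w1 (d x y) = y"
    using shortest_walk by blast
  obtain w2 where w2: "walk_fun E w2 (d y z)" "w2 0 = y" "w2 (d y z) = z"
    using shortest_walk by blast
  have "w1 (d x y) = w2 0"
    using w1 w2 by simp
  from dist_le_walk[OF walk_fun_append[OF w1(1) w2(1) this]]
  show ?thesis
    using w1 w2 by (cases "d y z = 0") simp_all
qed

lemma dist_eq_1_iff: "d x y = 1 \<longleftrightarrow> E x y"
proof
  assume "d x y = 1"
  then obtain w where "walk_fun E w 1" "w 0 = x" "w 1 = y"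
    using shortest_walk[of x y] by metis
  then show "E x y"
    by (simp add: walk_fun_def)
next
  assume "E x y"
  then have "d x y \<le> 1"
    using dist_le_walk[of "\<lambda>k. if k = 0 then x else y" 1] by (simp add: walk_fun_def)
  moreover have "d x y \<noteq> 0"
    using \<open>E x y\<close> edge_irrefl by (auto simp: dist_eq_0_iff)
  ultimately show "d x y = 1"
    by linarith
qed

lemma dist_edge: "E x y \<Longrightarrow> d x y = 1"
  by (rule dist_eq_1_iff[THEN iffD2])

lemma obtain_geodesic:
  obtains w where "walk_fun E w (d x y)" "w 0 = x" "w (d x y) = y" "\<And>k. k \<le> d x y \<Longrightarrow> d x (w k) = k"
proof -
  obtain w where w: "walk_fun E w (d x y)" "w 0 = x" "w (d x y) = y"
    using shortest_walk by blast
  have "d x (w k) = k" if k: "k \<le> d x y" for k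
  proof -
    have "d x (w k) \<le> k"
      using dist_le_walk[OF walk_fun_le[OF w(1) k]] w(2) by simp
    moreover have "d (w k) y \<le> d x y - k"
      using dist_le_walk[OF walk_fun_shift[OF w(1), of k]] w(3) k by simp
    ultimately show ?thesis
      using dist_triangle[of x y "w k"] k by linarith
  qed
  then show ?thesis
    using that w by blast
qed

lemma closed_walk_backtracks:
  assumes w: "walk_fun E w m" "0 < m" "w m = w 0"
  obtains k where "k + 2 \<le> m" "w k = w (k + 2)"
proof -
  let ?P = "\<lambda>(i, j). i < j \<and> j \<le> m \<and> w i = w j"
  obtain i j where ij: "i < j" "j \<le> m" "w i = w j"
    and shortest: "\<And>i' j'. i' < j' \<Longrightarrow> j' \<le> m \<Longrightarrow> w i' = w j' \<Longrightarrow> j - i \<le> j' - i'"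
    using ex_has_least_nat[of ?P "(0, m)" "\<lambda>(i, j). j - i"] w by fastforce
  define c where "c k = w (i + k)" for k
  have walk: "walk_fun E c (j - i)"
    unfolding c_def using walk_fun_shift[OF walk_fun_le[OF w(1) ij(2)]] .
  have closed: "c (j - i) = c 0"
    using ij by (simp add: c_def)
  have inj: "inj_on c {..<j - i}"
  proof (rule linorder_inj_onI)
    fix p q assume pq: "p < q" "q \<in> {..<j - i}"
    show "c p \<noteq> c q"
    proof
      assume "c p = c q"
      then have "j - i \<le> q - p"
        using shortest[of "i + p" "i + q"] pq ij by (simp add: c_def)
      then show False
        using pq by auto
    qed
  qed auto
  consider "j - i = 1" | "j - i = 2" | "3 \<le> j - i"
    using ij(1) by linarith
  then show thesis
  proof cases
    case 1
    then show ?thesis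
      using walk closed edge_irrefl by (simp add: walk_fun_def)
  next
    case 2
    then have "j = i + 2"
      using ij(1) by linarith
    then show ?thesis
      using that[of i] ij by simp
  next
    case 3
    then show ?thesis
      using no_cycle_walk[OF walk 3 closed inj] by blast
  qed
qed

lemma walk_fun_join:
  assumes "walk_fun E w1 r" "walk_fun E w2 s" "E (w1 r) (w2 s)"
  shows "walk_fun E (\<lambda>k. if k \<le> r then w1 k else w2 (r + s + 1 - k)) (r + s + 1)"
  unfolding walk_fun_def
proof (intro allI impI)
  fix k assume k: "k < r + s + 1"
  consider "k < r" | "k = r" | "r < k"
    by linarith
  then show "E (if k \<le> r then w1 k else w2 (r + s + 1 - k))
              (if Suc k \<le> r then w1 (Suc k) else w2 (r + s + 1 - Suc k))"
  proof cases
    case 3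
    define m where "m = r + s + 1 - Suc k"
    have "m < s" "r + s + 1 - k = Suc m"
      using 3 k by (auto simp: m_def)
    then show ?thesis
      using 3 assms(2) edge_sym by (simp add: walk_fun_def m_def)
  qed (use assms in \<open>simp_all add: walk_fun_def\<close>)
qed

lemma dist_adjacent_neq:
  assumes "E x y"
  shows "d u x \<noteq> d u y"
proof
  assume eq: "d u x = d u y"
  define r where "r = d u x"
  obtain w1 where w1: "walk_fun E w1 r" "w1 0 = u" "w1 r = x" "\<And>k. k \<le> r \<Longrightarrow> d u (w1 k) = k"
    using obtain_geodesic[of u x] unfolding r_def by blast
  obtain w2 where w2: "walk_fun E w2 r" "w2 0 = u" "w2 r = y" "\<And>k. k \<le> r \<Longrightarrow> d u (w2 k) = k"
    using obtain_geodesic[of u y] unfolding r_def eq by blast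
  define W where "W k = (if k \<le> r then w1 k else w2 (r + r + 1 - k))" for k
  have walk: "walk_fun E W (r + r + 1)"
    unfolding W_def by (rule walk_fun_join) (use w1 w2 assms in auto)
  have profile: "d u (W k) = (if k \<le> r then k else r + r + 1 - k)" if "k \<le> r + r + 1" for k
    using that w1(4) w2(4) by (simp add: W_def)
  obtain k where k: "k + 2 \<le> r + r + 1" "W k = W (k + 2)"
    using closed_walk_backtracks[OF walk] w1(2) w2(2) by (auto simp: W_def)
  then have "(if k \<le> r then k else r + r + 1 - k) =
             (if k + 2 \<le> r then k + 2 else r + r + 1 - (k + 2))"
    using profile[of k] profile[of "k + 2"] by simp
  \<comment> \<open>by parity, the profile never repeats a value two steps apart\<close>
  then show False
    using k(1) by presburger
qed

lemma dist_adjacent: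
  assumes "E x y"
  shows "d u y = Suc (d u x) \<or> d u x = Suc (d u y)"
proof -
  have "d x y = 1" "d y x = 1"
    using assms edge_sym dist_edge by blast+
  then have "d u y \<le> Suc (d u x)" "d u x \<le> Suc (d u y)"
    using dist_triangle[of u y x] dist_triangle[of u x y] by simp_all
  then show ?thesis
    using dist_adjacent_neq[OF assms, of u] by linarith
qed

lemma parent_unique:
  assumes "E x y1" "E x y2" "Suc (d u y1) = d u x" "Suc (d u y2) = d u x"
  shows "y1 = y2"
proof (rule ccontr)
  assume ne: "y1 \<noteq> y2"
  define r where "r = d u y1"
  obtain w1 where w1: "walk_fun E w1 r" "w1 0 = u" "w1 r = y1" "\<And>k. k \<le> r \<Longrightarrow> d u (w1 k) = k"
    using obtain_geodesic[of u y1] unfolding r_def by blast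
  have r2: "d u y2 = r"
    using assms(3,4) by (simp add: r_def)
  obtain w2 where w2: "walk_fun E w2 r" "w2 0 = u" "w2 r = y2" "\<And>k. k \<le> r \<Longrightarrow> d u (w2 k) = k"
    using obtain_geodesic[of u y2] unfolding r2 by blast
  have walk1: "walk_fun E (w1(Suc r := x)) (Suc r)"
    by (rule walk_fun_snoc) (use w1 assms(1) edge_sym in auto)
  define W where "W k = (if k \<le> Suc r then (w1(Suc r := x)) k else w2 (Suc r + r + 1 - k))" for k
  have walk: "walk_fun E W (Suc r + r + 1)"
    unfolding W_def by (rule walk_fun_join[OF walk1 w2(1)]) (use w2 assms(2) in simp)
  have profile: "d u (W k) = (if k \<le> Suc r then k else Suc r + r + 1 - k)" if "k \<le> Suc r + r + 1" for k
    using that w1(4) w2(4) assms(3) by (simp add: W_def r_def)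
  obtain k where k: "k + 2 \<le> Suc r + r + 1" "W k = W (k + 2)"
    using closed_walk_backtracks[OF walk] w1(2) w2(2) by (auto simp: W_def)
  then have "(if k \<le> Suc r then k else Suc r + r + 1 - k) =
             (if k + 2 \<le> Suc r then k + 2 else Suc r + r + 1 - (k + 2))"
    using profile[of k] profile[of "k + 2"] by simp
  \<comment> \<open>the profile repeats a value two steps apart only across the apex x, from y1 to y2\<close>
  then have "k = r"
    using k(1) by presburger
  then show False
    using k(2) w1(3) w2(3) ne by (simp add: W_def)
qed

lemma parent_exists:
  assumes "x \<noteq> u"
  obtains y where "E x y" "Suc (d u y) = d u x"
proof -
  obtain w where w: "walk_fun E w (d u x)" "w 0 = u" "w (d u x) = x" "\<And>k. k \<le> d u x \<Longrightarrow> d u (w k) = k"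
    using obtain_geodesic[of u x] by blast
  define r where "r = d u x - 1"
  have r: "Suc r = d u x"
    using assms dist_eq_0_iff[of u x] by (simp add: r_def)
  then have "E (w r) (w (Suc r))"
    using w(1) unfolding walk_fun_def by (metis lessI)
  then have "E (w r) x"
    using w(3) r by simp
  then show thesis
    using that[of "w r"] edge_sym w(4)[of r] r by auto
qed

definition children :: "'v \<Rightarrow> 'v \<Rightarrow> 'v set" where
  "children c p = {z. E p z \<and> d c z = Suc (d c p)}"

lemma children_card:
  assumes "p \<noteq> c"
  shows "finite (children c p) \<and> card (children c p) = \<kappa>"
proof -
  obtain q where q: "E p q" "Suc (d c q) = d c p"
    using parent_exists[OF assms] by blast
  have nbrs: "{z. E p z} = insert q (children c p)"
  proof (intro equalityI subsetI)
    fix z assume "z \<in> {z. E p z}"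
    then have "E p z"
      by simp
    then show "z \<in> insert q (children c p)"
      using dist_adjacent[of p z c] parent_unique[of p z q c] q by (auto simp: children_def)
  qed (use q in \<open>auto simp: children_def\<close>)
  have "finite (children c p)"
    using finite_nbrs[of p] nbrs by simp
  moreover have "q \<notin> children c p"
    using q by (simp add: children_def)
  ultimately show ?thesis
    using card_nbrs[of p] nbrs by simp
qed

lemma children_disjoint:
  assumes "p1 \<noteq> p2"
  shows "children c p1 \<inter> children c p2 = {}"
proof (rule ccontr)
  assume "children c p1 \<inter> children c p2 \<noteq> {}"
  then obtain z where "E p1 z" "E p2 z" "d c z = Suc (d c p1)" "d c z = Suc (d c p2)"
    by (auto simp: children_def)
  then show False
    using parent_unique[of z p1 p2 c] edge_sym assms by simp
qed

(* The vertices at distance h from c whose geodesic from c starts with the edge from c to y. *)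
definition branch_sphere :: "'v \<Rightarrow> 'v \<Rightarrow> nat \<Rightarrow> 'v set" where
  "branch_sphere c y h = {x. d c x = h \<and> Suc (d y x) = h}"

lemma branch_sphere_Suc:
  assumes "E c y"
  shows "branch_sphere c y (Suc (Suc h)) = (\<Union>p\<in>branch_sphere c y (Suc h). children c p)"
proof (intro equalityI subsetI)
  fix z assume "z \<in> branch_sphere c y (Suc (Suc h))"
  then have z: "d c z = Suc (Suc h)" "d y z = Suc h"
    by (auto simp: branch_sphere_def)
  then have "z \<noteq> y"
    by auto
  then obtain p where p: "E z p" "Suc (d y p) = d y z"
    using parent_exists by blast
  have "d c p \<le> Suc h"
    using dist_triangle[of c p y] dist_edge[OF assms] p z by simp
  then have "d c p = Suc h"
    using dist_adjacent[OF p(1), of c] z by auto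
  then show "z \<in> (\<Union>p\<in>branch_sphere c y (Suc h). children c p)"
    using p z edge_sym by (auto simp: branch_sphere_def children_def)
next
  fix z assume "z \<in> (\<Union>p\<in>branch_sphere c y (Suc h). children c p)"
  then obtain p where p: "d c p = Suc h" "d y p = h" "E p z" "d c z = Suc (Suc h)"
    by (auto simp: branch_sphere_def children_def)
  have "d c z \<le> Suc (d y z)"
    using dist_triangle[of c z y] dist_edge[OF assms] by simp
  then have "d y z = Suc h"
    using dist_adjacent[OF p(3), of y] p by auto
  then show "z \<in> branch_sphere c y (Suc (Suc h))"
    using p by (simp add: branch_sphere_def)
qed

lemma branch_sphere_card:
  assumes "E c y"
  shows "finite (branch_sphere c y (Suc h)) \<and> card (branch_sphere c y (Suc h)) = \<kappa> ^ h"
proof (induction h)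
  case 0
  have "branch_sphere c y 1 = {y}"
    using dist_edge[OF assms] by (auto simp: branch_sphere_def dist_eq_0_iff)
  then show ?case
    by simp
next
  case (Suc h)
  have "finite (children c p) \<and> card (children c p) = \<kappa>" if "p \<in> branch_sphere c y (Suc h)" for p
  proof -
    have "p \<noteq> c"
      using that by (auto simp: branch_sphere_def)
    then show ?thesis
      by (rule children_card)
  qed
  then show ?case
    using Suc children_disjoint
    by (simp add: branch_sphere_Suc[OF assms] card_UN_disjoint)
qed

lemma branch_spheres_card:
  assumes "Y \<subseteq> {y. E c y}"
  shows "finite (\<Union>y\<in>Y. branch_sphere c y (Suc h)) \<and>
         card (\<Union>y\<in>Y. branch_sphere c y (Suc h)) = card Y * \<kappa> ^ h"
proof -
  have "finite Y"
    using finite_nbrs assms by (rule finite_subset[rotated])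
  moreover have "branch_sphere c y1 (Suc h) \<inter> branch_sphere c y2 (Suc h) = {}"
    if "y1 \<in> Y" "y2 \<in> Y" "y1 \<noteq> y2" for y1 y2
  proof (rule ccontr)
    assume "branch_sphere c y1 (Suc h) \<inter> branch_sphere c y2 (Suc h) \<noteq> {}"
    then obtain x where "x \<in> branch_sphere c y1 (Suc h)" "x \<in> branch_sphere c y2 (Suc h)"
      by blast
    then have "Suc (d x y1) = d x c" "Suc (d x y2) = d x c"
      by (simp_all add: branch_sphere_def dist_commute)
    then show False
      using parent_unique[of c y1 y2 x] that assms by auto
  qed
  ultimately show ?thesis
    using assms branch_sphere_card by (simp add: card_UN_disjoint subset_iff)
qed

lemma dist_grows_from_local_min:
  assumes walk: "walk_fun E w n" and nonbacktracking: "\<And>k. k + 2 \<le> n \<Longrightarrow> w k \<noteq> w (k + 2)"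
    and local_min: "j < n \<Longrightarrow> d x (w j) \<le> d x (w (Suc j))"
  shows "j + t \<le> n \<Longrightarrow> d x (w (j + t)) = d x (w j) + t"
proof (induction t rule: induct_nat_012)
  case 0
  then show ?case
    by simp
next
  case 1
  then have "E (w j) (w (Suc j))"
    using walk by (simp add: walk_fun_def)
  then show ?case
    using dist_adjacent[of "w j" "w (Suc j)" x] local_min 1 by auto
next
  case (ge2 t)
  define a b c where "a = w (j + t)" and "b = w (j + Suc t)" and "c = w (j + Suc (Suc t))"
  have "E b a" "E b c"
    using walk ge2.prems edge_sym by (auto simp: walk_fun_def a_def b_def c_def)
  moreover have "a \<noteq> c"
    using nonbacktracking[of "j + t"] ge2.prems by (simp add: a_def c_def)
  moreover have "Suc (d x a) = d x b"
    using ge2.IH ge2.prems by (simp add: a_def b_def)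
  ultimately have "d x c = Suc (d x b)"
    using dist_adjacent[of b c x] parent_unique[of b a c x] by auto
  then show ?case
    using ge2.IH ge2.prems by (simp add: b_def c_def)
qed

end

definition fibre_count :: "nat \<Rightarrow> nat \<Rightarrow> nat \<Rightarrow> nat \<Rightarrow> nat" where
  "fibre_count \<kappa> n j h =
     (if h = 0 then 1 else (\<kappa> + 1 - (if 0 < j then 1 else 0) - (if j < n then 1 else 0)) * \<kappa> ^ (h - 1))"

lemma fibre_count_0 [simp]: "fibre_count \<kappa> n j 0 = 1"
  by (simp add: fibre_count_def)

lemma fibre_count_root: "fibre_count \<kappa> 0 0 (Suc h) = (\<kappa> + 1) * \<kappa> ^ h"
  by (simp add: fibre_count_def)

lemma fibre_count_end: "0 < n \<Longrightarrow> j = 0 \<or> j = n \<Longrightarrow> fibre_count \<kappa> n j h = \<kappa> ^ h"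
  by (cases h) (auto simp: fibre_count_def)

lemma fibre_count_inner: "0 < j \<Longrightarrow> j < n \<Longrightarrow> fibre_count \<kappa> n j (Suc h) = (\<kappa> - 1) * \<kappa> ^ h"
  by (simp add: fibre_count_def)

locale geodesic_ray = cayley_graph \<kappa> E for \<kappa> and E :: "'v \<Rightarrow> 'v \<Rightarrow> bool" +
  fixes v :: "nat \<Rightarrow> 'v"
  assumes geodesic_v: "geodesic_seq E v"
begin

lemma dist_v: "d (v k) (v m) = (if k \<le> m then m - k else k - m)"
  using geodesic_v unfolding geodesic_seq_def by blast

lemma edge_v: "E (v k) (v (Suc k))"
  using dist_v[of k "Suc k"] dist_eq_1_iff by simp

lemma edge_v_pred: "0 < j \<Longrightarrow> E (v j) (v (j - 1))"
  using edge_sym[OF edge_v, of "j - 1"] by simp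

lemma v_nonbacktracking: "v k \<noteq> v (k + 2)"
  using dist_v[of k "k + 2"] by auto

lemma walk_v: "walk_fun E v n"
  by (simp add: walk_fun_def edge_v)

lemma dist_v_right_of_local_min:
  assumes "j \<le> k" "k \<le> n" and local_min: "j < n \<Longrightarrow> d x (v j) \<le> d x (v (Suc j))"
  shows "d x (v k) = d x (v j) + (k - j)"
  using dist_grows_from_local_min[OF walk_v[of n] v_nonbacktracking local_min, where t = "k - j"] assms
  by simp

lemma dist_v_left_of_local_min:
  assumes "k \<le> j" "j \<le> n" and local_min: "0 < j \<Longrightarrow> d x (v j) \<le> d x (v (j - 1))"
  shows "d x (v k) = d x (v j) + (j - k)"
proof -
  let ?w = "\<lambda>k. v (n - k)"
  have nonbacktracking: "?w i \<noteq> ?w (i + 2)" if "i + 2 \<le> n" for i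
    using v_nonbacktracking[of "n - (i + 2)"] that by (simp add: numeral_2_eq_2 Suc_diff_Suc)
  have "d x (?w (n - j)) \<le> d x (?w (Suc (n - j)))" if "n - j < n"
    using local_min that assms by (simp add: Suc_diff_Suc)
  from dist_grows_from_local_min[OF walk_fun_rev[OF walk_v[of n]] nonbacktracking this, where t = "j - k"]
  have "d x (?w (n - j + (j - k))) = d x (?w (n - j)) + (j - k)"
    using assms by simp
  then show ?thesis
    using assms by simp
qed

definition fibre :: "nat \<Rightarrow> nat \<Rightarrow> nat \<Rightarrow> 'v set" where
  "fibre n j h = {x. \<forall>k\<le>n. d x (v k) = h + (if k \<le> j then j - k else k - j)}"

lemma mem_fibre_iff:
  assumes "j \<le> n"
  shows "x \<in> fibre n j h \<longleftrightarrow>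
           d x (v j) = h \<and> (0 < j \<longrightarrow> d x (v (j - 1)) = Suc h) \<and> (j < n \<longrightarrow> d x (v (Suc j)) = Suc h)"
proof
  assume "x \<in> fibre n j h"
  then have "d x (v k) = h + (if k \<le> j then j - k else k - j)" if "k \<le> n" for k
    using that by (simp add: fibre_def)
  then show "d x (v j) = h \<and> (0 < j \<longrightarrow> d x (v (j - 1)) = Suc h) \<and> (j < n \<longrightarrow> d x (v (Suc j)) = Suc h)"
    using assms by simp
next
  assume local: "d x (v j) = h \<and> (0 < j \<longrightarrow> d x (v (j - 1)) = Suc h) \<and> (j < n \<longrightarrow> d x (v (Suc j)) = Suc h)"
  have "d x (v k) = h + (if k \<le> j then j - k else k - j)" if "k \<le> n" for k
  proof (cases "k \<le> j")
    case True
    then show ?thesis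
      using dist_v_left_of_local_min[of k j n x] local assms by simp
  next
    case False
    then show ?thesis
      using dist_v_right_of_local_min[of j k n x] local that by simp
  qed
  then show "x \<in> fibre n j h"
    by (simp add: fibre_def)
qed

lemma fibres_cover: "\<exists>j\<le>n. \<exists>h. x \<in> fibre n j h"
proof -
  obtain j where j: "j \<le> n" and min: "\<And>k. k \<le> n \<Longrightarrow> d x (v j) \<le> d x (v k)"
    using ex_has_least_nat[of "\<lambda>k. k \<le> n" 0 "\<lambda>k. d x (v k)"] by auto
  have "d x (v k) = Suc (d x (v j))" if "k \<le> n" "E (v j) (v k)" for k
    using dist_adjacent[OF that(2), of x] min[OF that(1)] by auto
  then have "x \<in> fibre n j (d x (v j))"
    using j edge_v edge_v_pred by (auto simp: mem_fibre_iff)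
  then show ?thesis
    using j by blast
qed

lemma fibre_dists:
  assumes "x \<in> fibre n j h" "j \<le> n"
  shows "d (v 0) x = h + j" "d x (v n) = h + (n - j)"
  using assms by (auto simp: fibre_def dist_commute dest!: spec[of _ 0] spec[of _ n])

lemma fibres_disjoint: "disjoint_family_on (\<lambda>(j, h). fibre n j h) ({..n} \<times> UNIV)"
proof -
  have "j1 = j2 \<and> h1 = h2"
    if "j1 \<le> n" "j2 \<le> n" "x \<in> fibre n j1 h1" "x \<in> fibre n j2 h2" for j1 h1 j2 h2 x
  proof -
    have "h1 + j1 = h2 + j2" "h1 + (n - j1) = h2 + (n - j2)"
      using fibre_dists that by metis+
    then show ?thesis
      using that(1,2) by linarith
  qed
  then show ?thesis
    unfolding disjoint_family_on_def by fastforce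
qed

definition off_segment_nbrs :: "nat \<Rightarrow> nat \<Rightarrow> 'v set" where
  "off_segment_nbrs n j = {y. E (v j) y \<and> (0 < j \<longrightarrow> y \<noteq> v (j - 1)) \<and> (j < n \<longrightarrow> y \<noteq> v (Suc j))}"

lemma card_off_segment_nbrs:
  "card (off_segment_nbrs n j) = \<kappa> + 1 - (if 0 < j then 1 else 0) - (if j < n then 1 else 0)"
proof -
  define S where "S = (if 0 < j then {v (j - 1)} else {}) \<union> (if j < n then {v (Suc j)} else {})"
  have "off_segment_nbrs n j = {y. E (v j) y} - S"
    by (auto simp: off_segment_nbrs_def S_def)
  moreover have "S \<subseteq> {y. E (v j) y}"
    using edge_v edge_v_pred by (auto simp: S_def)
  moreover have "v (j - 1) \<noteq> v (Suc j)" if "0 < j"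
  proof
    assume "v (j - 1) = v (Suc j)"
    moreover have "d (v (j - 1)) (v (Suc j)) = 2"
      using dist_v[of "j - 1" "Suc j"] that by simp
    ultimately show False
      by simp
  qed
  then have "card S = (if 0 < j then 1 else 0) + (if j < n then 1 else 0)"
    by (auto simp: S_def)
  ultimately show ?thesis
    using card_nbrs[of "v j"] by (simp add: card_Diff_subset finite_subset[OF _ finite_nbrs])
qed

lemma fibre_0: "j \<le> n \<Longrightarrow> fibre n j 0 = {v j}"
  using dist_v[of j "j - 1"] dist_v[of j "Suc j"] by (auto simp: mem_fibre_iff dist_eq_0_iff dist_commute)

lemma fibre_Suc:
  assumes "j \<le> n"
  shows "fibre n j (Suc h) = (\<Union>y\<in>off_segment_nbrs n j. branch_sphere (v j) y (Suc h))"
proof (intro equalityI subsetI)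
  fix x assume "x \<in> fibre n j (Suc h)"
  then have x: "d x (v j) = Suc h" "0 < j \<longrightarrow> d x (v (j - 1)) = Suc (Suc h)"
    "j < n \<longrightarrow> d x (v (Suc j)) = Suc (Suc h)"
    using assms by (simp_all add: mem_fibre_iff)
  then have "v j \<noteq> x"
    by auto
  then obtain y where y: "E (v j) y" "Suc (d x y) = d x (v j)"
    by (rule parent_exists)
  then have "y \<in> off_segment_nbrs n j"
    using x by (auto simp: off_segment_nbrs_def)
  moreover have "x \<in> branch_sphere (v j) y (Suc h)"
    using x y by (simp add: branch_sphere_def dist_commute)
  ultimately show "x \<in> (\<Union>y\<in>off_segment_nbrs n j. branch_sphere (v j) y (Suc h))"
    by blast
next
  fix x assume "x \<in> (\<Union>y\<in>off_segment_nbrs n j. branch_sphere (v j) y (Suc h))"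
  then obtain y where y: "y \<in> off_segment_nbrs n j" "x \<in> branch_sphere (v j) y (Suc h)"
    by blast
  then have x: "d x (v j) = Suc h" "Suc (d x y) = d x (v j)" and "E (v j) y"
    by (simp_all add: branch_sphere_def dist_commute off_segment_nbrs_def)
  have far: "d x u = Suc (Suc h)" if "E (v j) u" "u \<noteq> y" for u
    using dist_adjacent[OF that(1), of x] parent_unique[OF that(1) \<open>E (v j) y\<close> _ x(2)] that(2) x(1)
    by auto
  have "0 < j \<longrightarrow> d x (v (j - 1)) = Suc (Suc h)" "j < n \<longrightarrow> d x (v (Suc j)) = Suc (Suc h)"
    using y(1) far[OF edge_v_pred] far[OF edge_v] by (auto simp: off_segment_nbrs_def)
  then show "x \<in> fibre n j (Suc h)"
    using x(1) assms by (simp add: mem_fibre_iff)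
qed

lemma fibre_card:
  assumes "j \<le> n"
  shows "finite (fibre n j h) \<and> card (fibre n j h) = fibre_count \<kappa> n j h"
proof (cases h)
  case 0
  then show ?thesis
    using fibre_0[OF assms] by (simp add: fibre_count_def)
next
  case (Suc h')
  have "off_segment_nbrs n j \<subseteq> {y. E (v j) y}"
    by (auto simp: off_segment_nbrs_def)
  then show ?thesis
    using branch_spheres_card[of "off_segment_nbrs n j" "v j" h'] fibre_Suc[OF assms] card_off_segment_nbrs Suc
    by (simp add: fibre_count_def)
qed

end

lemma has_sum_finite_partition:
  fixes g :: "'a \<Rightarrow> 'b::{ring_1, uniform_topological_group_add}"
  assumes g: "(g has_sum S) UNIV" and disjoint: "disjoint_family_on P I" and cover: "(\<Union>i\<in>I. P i) = UNIV"
    and finite: "\<And>i. i \<in> I \<Longrightarrow> finite (P i)" and const: "\<And>i x. i \<in> I \<Longrightarrow> x \<in> P i \<Longrightarrow> g x = c i"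
  shows "((\<lambda>i. of_nat (card (P i)) * c i) has_sum S) I"
proof -
  have "inj_on snd (Sigma I P)"
  proof (rule inj_onI)
    fix p q assume "p \<in> Sigma I P" "q \<in> Sigma I P" "snd p = snd q"
    then show "p = q"
      using disjoint_family_onD[OF disjoint, of "fst p" "fst q"] by (cases p, cases q) auto
  qed
  moreover have "snd ` Sigma I P = UNIV"
  proof (intro equalityI subsetI)
    fix x :: 'a
    have "x \<in> (\<Union>i\<in>I. P i)"
      using cover by simp
    then obtain i where "i \<in> I" "x \<in> P i"
      by blast
    then show "x \<in> snd ` Sigma I P"
      by force
  qed simp
  ultimately have "bij_betw snd (Sigma I P) UNIV"
    by (simp add: bij_betw_def)
  then have "((\<lambda>p. g (snd p)) has_sum S) (Sigma I P)"
    using g by (simp add: has_sum_reindex_bij_betw)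
  moreover have "((\<lambda>x. g (snd (i, x))) has_sum of_nat (card (P i)) * c i) (P i)" if "i \<in> I" for i
  proof -
    have "sum g (P i) = of_nat (card (P i)) * c i"
      using const[OF that] by simp
    then show ?thesis
      using has_sum_finite[OF finite[OF that], of g] by simp
  qed
  ultimately show ?thesis
    by (rule has_sum_Sigma')
qed

lemma has_sum_Times_UNIV_nat:
  fixes f :: "'a \<times> nat \<Rightarrow> 'b::{banach, uniform_topological_group_add}"
  assumes f: "(f has_sum S) (A \<times> UNIV)" and "finite A"
  shows "(\<forall>i\<in>A. summable (\<lambda>l. f (i, l))) \<and> S = (\<Sum>i\<in>A. \<Sum>l. f (i, l))"
proof -
  have slice: "((\<lambda>l. f (i, l)) has_sum (\<Sum>l. f (i, l))) UNIV \<and> summable (\<lambda>l. f (i, l))" if "i \<in> A" for i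
  proof -
    have "f summable_on (Pair i ` UNIV)"
      by (rule summable_on_subset_banach[OF has_sum_imp_summable[OF f]]) (use that in auto)
    then have "(\<lambda>l. f (i, l)) summable_on UNIV"
      by (subst (asm) summable_on_reindex) (auto simp: o_def inj_on_def)
    then have "((\<lambda>l. f (i, l)) has_sum (\<Sum>\<^sub>\<infinity>l. f (i, l))) UNIV"
      by (rule has_sum_infsum)
    moreover from this have "(\<lambda>l. f (i, l)) sums (\<Sum>\<^sub>\<infinity>l. f (i, l))"
      by (rule has_sum_imp_sums)
    ultimately show ?thesis
      by (simp add: sums_iff)
  qed
  have "((\<lambda>i. \<Sum>l. f (i, l)) has_sum S) A"
    by (rule has_sum_Sigma'[OF f]) (use slice in blast)
  then show ?thesis
    using slice has_sum_finite_iff[OF \<open>finite A\<close>] by blast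
qed

lemma summable_on_mult_of_square_summable:
  fixes a b :: "'a \<Rightarrow> 'b::{real_normed_div_algebra, banach}"
  assumes "(\<lambda>x. (norm (a x))\<^sup>2) summable_on A" "(\<lambda>x. (norm (b x))\<^sup>2) summable_on A"
  shows "(\<lambda>x. a x * b x) summable_on A"
proof -
  have bound: "norm (a x * b x) \<le> (norm (a x))\<^sup>2 + (norm (b x))\<^sup>2" for x
  proof -
    have "2 * (norm (a x) * norm (b x)) \<le> (norm (a x))\<^sup>2 + (norm (b x))\<^sup>2"
      using sum_squares_bound[of "norm (a x)" "norm (b x)"] by (simp add: mult.assoc)
    moreover have "0 \<le> norm (a x) * norm (b x)"
      by simp
    ultimately show ?thesis
      unfolding norm_mult by linarith
  qed
  have "(\<lambda>x. norm (a x * b x)) summable_on A"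
    using Infinite_Sum.abs_summable_on_comparison_test'[where f = "\<lambda>x. a x * b x", OF summable_on_add[OF assms] bound]
    by simp
  then show ?thesis
    by (rule abs_summable_summable)
qed

lemma in_A_column_square_summable:
  assumes "in_A \<kappa> E \<alpha>"
  shows "(\<lambda>x. (norm (\<alpha> (gdist E x y)))\<^sup>2) summable_on UNIV"
proof -
  define \<delta> :: "_ \<Rightarrow> complex" where "\<delta> y' = (if y' = y then 1 else 0)" for y'
  have "l2 \<delta>"
    unfolding l2_def by (rule finite_nonzero_values_imp_summable_on) (simp add: \<delta>_def)
  then have "l2 (\<lambda>x. \<Sum>\<^sub>\<infinity>y'. \<alpha> (gdist E x y') * \<delta> y')"
    using assms unfolding in_A_def by blast
  moreover have "(\<Sum>\<^sub>\<infinity>y'. \<alpha> (gdist E x y') * \<delta> y') = \<alpha> (gdist E x y)" for x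
    by (subst infsum_cong_neutral[where T = "{y}"]) (auto simp: \<delta>_def)
  ultimately show ?thesis
    by (simp add: l2_def)
qed

locale tree_convolution = geodesic_ray \<kappa> E v for \<kappa> and E :: "'v \<Rightarrow> 'v \<Rightarrow> bool" and v +
  fixes \<alpha>1 \<alpha>2 :: "nat \<Rightarrow> complex"
  assumes in_A_\<alpha>1: "in_A \<kappa> E \<alpha>1" and in_A_\<alpha>2: "in_A \<kappa> E \<alpha>2"
begin

definition fibre_term :: "nat \<Rightarrow> nat \<Rightarrow> nat \<Rightarrow> complex" where
  "fibre_term n j h = of_nat (fibre_count \<kappa> n j h) * (\<alpha>1 (h + j) * \<alpha>2 (h + (n - j)))"

lemma tree_conv_has_sum:
  "((\<lambda>x. \<alpha>1 (d (v 0) x) * \<alpha>2 (d x (v n))) has_sum tree_conv E v \<alpha>1 \<alpha>2 n) UNIV"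
proof -
  have "(\<lambda>x. (norm (\<alpha>1 (d (v 0) x)))\<^sup>2) summable_on UNIV"
    using in_A_column_square_summable[OF in_A_\<alpha>1, of "v 0"] unfolding dist_commute[of _ "v 0"] .
  then have "(\<lambda>x. \<alpha>1 (d (v 0) x) * \<alpha>2 (d x (v n))) summable_on UNIV"
    by (rule summable_on_mult_of_square_summable[OF _ in_A_column_square_summable[OF in_A_\<alpha>2]])
  then show ?thesis
    unfolding tree_conv_def by (rule has_sum_infsum)
qed

lemma tree_conv_fibre_sum:
  "tree_conv E v \<alpha>1 \<alpha>2 n = (\<Sum>j\<le>n. \<Sum>h. fibre_term n j h) \<and> (\<forall>j\<le>n. summable (fibre_term n j))"
proof -
  define g where "g x = \<alpha>1 (d (v 0) x) * \<alpha>2 (d x (v n))" for x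
  define P where "P = (\<lambda>(j, h). fibre n j h)"
  define c where "c = (\<lambda>(j, h). \<alpha>1 (h + j) * \<alpha>2 (h + (n - j)))"
  have cover: "(\<Union>i\<in>{..n} \<times> UNIV. P i) = UNIV"
  proof (intro equalityI subsetI)
    fix x :: 'v
    obtain j h where "j \<le> n" "x \<in> fibre n j h"
      using fibres_cover by blast
    then show "x \<in> (\<Union>i\<in>{..n} \<times> UNIV. P i)"
      by (intro UN_I[of "(j, h)"]) (simp_all add: P_def)
  qed simp
  have finite: "finite (P i)" and const: "\<And>x. x \<in> P i \<Longrightarrow> g x = c i"
    and count: "of_nat (card (P i)) * c i = (case i of (j, h) \<Rightarrow> fibre_term n j h)"
    if mem: "i \<in> {..n} \<times> UNIV" for i
  proof -
    obtain j h where i: "i = (j, h)" "j \<le> n"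
      using mem by auto
    show "finite (P i)" "of_nat (card (P i)) * c i = (case i of (j, h) \<Rightarrow> fibre_term n j h)"
      using fibre_card[OF i(2), of h] by (simp_all add: i P_def c_def fibre_term_def)
    show "g x = c i" if "x \<in> P i" for x
      using fibre_dists[of x n j h] that i by (simp add: P_def c_def g_def)
  qed
  have "((\<lambda>i. of_nat (card (P i)) * c i) has_sum tree_conv E v \<alpha>1 \<alpha>2 n) ({..n} \<times> UNIV)"
    by (rule has_sum_finite_partition[OF tree_conv_has_sum[of n, folded g_def]
          fibres_disjoint[of n, folded P_def] cover finite const])
  also have "?this \<longleftrightarrow> ((\<lambda>(j, h). fibre_term n j h) has_sum tree_conv E v \<alpha>1 \<alpha>2 n) ({..n} \<times> UNIV)"
    by (rule has_sum_cong) (rule count)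
  finally have "((\<lambda>(j, h). fibre_term n j h) has_sum tree_conv E v \<alpha>1 \<alpha>2 n) ({..n} \<times> UNIV)" .
  from has_sum_Times_UNIV_nat[OF this finite_atMost]
  show ?thesis
    unfolding case_prod_conv atMost_iff by (simp only: Ball_def atMost_iff) blast
qed

lemma tree_conv_0:
  "tree_conv E v \<alpha>1 \<alpha>2 0 =
     \<alpha>1 0 * \<alpha>2 0 + (\<Sum>l. of_nat ((\<kappa> + 1) * \<kappa> ^ l) * \<alpha>1 (l + 1) * \<alpha>2 (l + 1))"
proof -
  have conv: "tree_conv E v \<alpha>1 \<alpha>2 0 = suminf (fibre_term 0 0)" and "summable (fibre_term 0 0)"
    using tree_conv_fibre_sum[of 0] by simp_all
  then have split: "suminf (fibre_term 0 0) = fibre_term 0 0 0 + (\<Sum>l. fibre_term 0 0 (Suc l))"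
    using suminf_split_head[of "fibre_term 0 0"] by simp
  have head: "fibre_term 0 0 0 = \<alpha>1 0 * \<alpha>2 0"
    by (simp add: fibre_term_def)
  have tail: "(\<lambda>l. fibre_term 0 0 (Suc l)) = (\<lambda>l. of_nat ((\<kappa> + 1) * \<kappa> ^ l) * \<alpha>1 (l + 1) * \<alpha>2 (l + 1))"
    by (simp add: fun_eq_iff fibre_term_def fibre_count_root mult.assoc del: of_nat_mult)
  from split show ?thesis
    unfolding conv head tail .
qed

lemma fibre_sum_ends:
  assumes "0 < n"
  shows "(\<Sum>h. fibre_term n 0 h) + (\<Sum>h. fibre_term n n h) =
           (\<Sum>l. of_nat (\<kappa> ^ l) * (\<alpha>1 l * \<alpha>2 (l + n) + \<alpha>1 (l + n) * \<alpha>2 l))"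
proof -
  have "summable (fibre_term n 0)" "summable (fibre_term n n)"
    using tree_conv_fibre_sum[of n] by simp_all
  then have "(\<Sum>h. fibre_term n 0 h) + (\<Sum>h. fibre_term n n h) = (\<Sum>h. fibre_term n 0 h + fibre_term n n h)"
    by (rule suminf_add)
  also have "\<dots> = (\<Sum>l. of_nat (\<kappa> ^ l) * (\<alpha>1 l * \<alpha>2 (l + n) + \<alpha>1 (l + n) * \<alpha>2 l))"
    using fibre_count_end[OF assms] by (simp add: fibre_term_def distrib_left del: of_nat_power)
  finally show ?thesis .
qed

lemma fibre_sum_inner:
  assumes "0 < i" "i < n"
  shows "(\<Sum>h. fibre_term n i h) =
           \<alpha>1 i * \<alpha>2 (n - i) + (\<Sum>l. of_nat ((\<kappa> - 1) * \<kappa> ^ l) * \<alpha>1 (l + 1 + i) * \<alpha>2 (l + 1 + n - i))"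
proof -
  have "summable (fibre_term n i)"
    using tree_conv_fibre_sum[of n] assms by simp
  then have split: "(\<Sum>h. fibre_term n i h) = fibre_term n i 0 + (\<Sum>l. fibre_term n i (Suc l))"
    using suminf_split_head[of "fibre_term n i"] by simp
  have head: "fibre_term n i 0 = \<alpha>1 i * \<alpha>2 (n - i)"
    by (simp add: fibre_term_def)
  have "fibre_term n i (Suc l) = of_nat ((\<kappa> - 1) * \<kappa> ^ l) * \<alpha>1 (l + 1 + i) * \<alpha>2 (l + 1 + n - i)"
    for l
  proof -
    have "l + 1 + n - i = Suc l + (n - i)" "l + 1 + i = Suc l + i"
      using assms by simp_all
    then show ?thesis
      using assms by (simp only:) (simp add: fibre_term_def fibre_count_inner mult.assoc del: of_nat_mult)
  qed
  then have tail: "(\<lambda>l. fibre_term n i (Suc l)) =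
                     (\<lambda>l. of_nat ((\<kappa> - 1) * \<kappa> ^ l) * \<alpha>1 (l + 1 + i) * \<alpha>2 (l + 1 + n - i))"
    by (simp add: fun_eq_iff)
  from split show ?thesis
    unfolding head tail .
qed

lemma tree_conv_1:
  "tree_conv E v \<alpha>1 \<alpha>2 1 = (\<Sum>l. of_nat (\<kappa> ^ l) * (\<alpha>1 l * \<alpha>2 (l + 1) + \<alpha>1 (l + 1) * \<alpha>2 l))"
  using tree_conv_fibre_sum[of 1] fibre_sum_ends[of 1] by simp

lemma tree_conv_ge2:
  assumes "2 \<le> n"
  shows "tree_conv E v \<alpha>1 \<alpha>2 n =
           (\<Sum>l. of_nat (\<kappa> ^ l) * (\<alpha>1 l * \<alpha>2 (l + n) + \<alpha>1 (l + n) * \<alpha>2 l))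
         + (\<Sum>i=1..n-1. \<alpha>1 i * \<alpha>2 (n - i))
         + (\<Sum>i=1..n-1. (\<Sum>l. of_nat ((\<kappa> - 1) * \<kappa> ^ l) * \<alpha>1 (l + 1 + i) * \<alpha>2 (l + 1 + n - i)))"
proof -
  have "{..n} = insert 0 (insert n {1..n-1})"
    using assms by auto
  then have "tree_conv E v \<alpha>1 \<alpha>2 n =
               (\<Sum>h. fibre_term n 0 h) + (\<Sum>h. fibre_term n n h) + (\<Sum>i=1..n-1. \<Sum>h. fibre_term n i h)"
    using tree_conv_fibre_sum[of n] assms by (simp add: add.assoc)
  also have "(\<Sum>i=1..n-1. \<Sum>h. fibre_term n i h) =
               (\<Sum>i=1..n-1. \<alpha>1 i * \<alpha>2 (n - i)) +
               (\<Sum>i=1..n-1. (\<Sum>l. of_nat ((\<kappa> - 1) * \<kappa> ^ l) * \<alpha>1 (l + 1 + i) * \<alpha>2 (l + 1 + n - i)))"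
    unfolding sum.distrib[symmetric] by (intro sum.cong refl fibre_sum_inner) auto
  finally show ?thesis
    using fibre_sum_ends assms by (simp add: add.assoc)
qed

end

theorem lemma2p1:
  fixes \<kappa> :: nat and E :: "'v \<Rightarrow> 'v \<Rightarrow> bool" and v :: "nat \<Rightarrow> 'v"
    and \<alpha>1 \<alpha>2 :: "nat \<Rightarrow> complex"
  assumes "\<kappa> \<ge> 1" and "cayley_tree \<kappa> E"
    and "in_A \<kappa> E \<alpha>1" and "in_A \<kappa> E \<alpha>2"
    and "geodesic_seq E v"
  shows "tree_conv E v \<alpha>1 \<alpha>2 0 =
           \<alpha>1 0 * \<alpha>2 0 + (\<Sum>l. of_nat ((\<kappa> + 1) * \<kappa> ^ l) * \<alpha>1 (l + 1) * \<alpha>2 (l + 1)) \<and>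
         tree_conv E v \<alpha>1 \<alpha>2 1 =
           (\<Sum>l. of_nat (\<kappa> ^ l) * (\<alpha>1 l * \<alpha>2 (l + 1) + \<alpha>1 (l + 1) * \<alpha>2 l)) \<and>
         (\<forall>n\<ge>2. tree_conv E v \<alpha>1 \<alpha>2 n =
           (\<Sum>l. of_nat (\<kappa> ^ l) * (\<alpha>1 l * \<alpha>2 (l + n) + \<alpha>1 (l + n) * \<alpha>2 l))
         + (\<Sum>i=1..n-1. \<alpha>1 i * \<alpha>2 (n - i))
         + (\<Sum>i=1..n-1. (\<Sum>l. of_nat ((\<kappa> - 1) * \<kappa> ^ l) * \<alpha>1 (l + 1 + i) * \<alpha>2 (l + 1 + n - i))))"
proof -
  interpret tree_convolution \<kappa> E v \<alpha>1 \<alpha>2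
    by unfold_locales (use assms(2-5) in auto)
  show ?thesis
    using tree_conv_0 tree_conv_1 tree_conv_ge2 by blast
qed

end
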